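(* Let $n$ be prime, let $c: [n] \to [n]$ be given by $c(i) = i+1$ for $1 \le i < n$ and $c(n) = 1$, and let $w = w(1)\cdots w(n) \in \mathbb{P}^n$ be a nonconstant word. Then for $\pi \in \mathfrak{S}_n$, $\mathrm{cstd}(w) = \pi$ if and only if $w \in A(\pi, S)$ where $S = \mathrm{Des}(\pi c \pi^{-1})$.
   Context: $\mathbb{P} = \{1,2,\ldots\}$ and $\mathfrak{S}_n$ is the set of permutations of $[n]$. A word $w \in \mathbb{P}^n$ is identified with the coloring $i \mapsto w(i)$ of $[n]$. For $1 \le i \le n$ the rotation $r_i(w)$ is the word $w(i)w(i+1)\cdots w(n)w(1)\cdots w(i-1)$. When $n$ is prime and $w$ is nonconstant, the $n$ rotations are pairwise distinct, and the cyclic standardization $\mathrm{cstd}(w)$ is the unique $\pi \in \mathfrak{S}_n$ such that $r_x(w) <_{\mathrm{lex}} r_y(w)$ whenever $\pi(x) < \pi(y)$ (i.e. $\pi(i) = j$ when $r_i(w)$ is the $j$th smallest rotation in lexicographic order). For $\pi \in \mathfrak{S}_n$ and $S \subseteq [n-1]$, $A(\pi,S)$ is the set of words $w$ with $w(\pi^{-1}(1)) \le \cdots \le w(\pi^{-1}(n))$ and $w(\pi^{-1}(i)) < w(\pi^{-1}(i+1))$ for $i \in S$. $\mathrm{Des}(\sigma) = \{i \in [n-1]: \sigma(i) > \sigma(i+1)\}$. *)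

theory Defs
  imports "HOL-Combinatorics.Permutations" "HOL-Computational_Algebra.Primes"
begin

text \<open>Words of length n are functions nat => nat; only the values on {1..n} matter.
  Permutations of [n] are functions permuting {1..n} (identity elsewhere).\<close>

definition rot :: "nat \<Rightarrow> (nat \<Rightarrow> nat) \<Rightarrow> nat \<Rightarrow> nat list" where
  "rot n w i = map (\<lambda>j. w (((i - 1) + (j - 1)) mod n + 1)) [1..<n+1]"

definition cstd :: "nat \<Rightarrow> (nat \<Rightarrow> nat) \<Rightarrow> (nat \<Rightarrow> nat)" where
  "cstd n w = (THE \<pi>. \<pi> permutes {1..n} \<and>
     (\<forall>x\<in>{1..n}. \<forall>y\<in>{1..n}. \<pi> x < \<pi> y \<longrightarrow> ord_class.lexordp (rot n w x) (rot n w y)))"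

definition Aset :: "nat \<Rightarrow> (nat \<Rightarrow> nat) \<Rightarrow> nat set \<Rightarrow> (nat \<Rightarrow> nat) set" where
  "Aset n \<pi> S = {w. (\<forall>i\<in>{1..n}. w i \<ge> 1) \<and>
     (\<forall>i\<in>{1..<n}. w (inv \<pi> i) \<le> w (inv \<pi> (i+1))) \<and>
     (\<forall>i\<in>S. w (inv \<pi> i) < w (inv \<pi> (i+1)))}"

definition Des :: "nat \<Rightarrow> (nat \<Rightarrow> nat) \<Rightarrow> nat set" where
  "Des n \<sigma> = {i\<in>{1..<n}. \<sigma> i > \<sigma> (i+1)}"

definition cyc :: "nat \<Rightarrow> nat \<Rightarrow> nat" where
  "cyc n i = (if 1 \<le> i \<and> i < n then i + 1 else if i = n then 1 else i)"

end

theory Submission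
  imports Defs "HOL-Library.List_Lexorder" "HOL-Number_Theory.Cong"
begin

text \<open>Two rotations of \<open>w\<close> compare lexicographically by their first letters and, on a tie,
  like the rotations starting one step further along the cycle \<open>c\<close>. Hence if \<open>\<pi> = cstd w\<close>,
  then \<open>w \<circ> \<pi>\<^sup>-\<^sup>1\<close> is weakly increasing, and equal letters at ranks \<open>i\<close> and \<open>i + 1\<close>
  force \<open>\<pi> c \<pi>\<^sup>-\<^sup>1\<close> to ascend at \<open>i\<close>. Conversely, under these two conditions \<open>\<pi> x < \<pi> y\<close>
  implies \<open>w x \<le> w y\<close> and, in case of equality, \<open>\<pi> (c x) < \<pi> (c y)\<close>; iterating along
  the cycle shows that the rotation at \<open>x\<close> is lexicographically at most the one at \<open>y\<close>.
  They cannot be equal: for prime \<open>n\<close>, two equal rotations would give the letters along the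
  cycle the coprime periods \<open>d\<close> and \<open>n\<close>, making \<open>w\<close> constant.\<close>

definition orbit_word :: "('a \<Rightarrow> 'a) \<Rightarrow> ('a \<Rightarrow> 'b) \<Rightarrow> nat \<Rightarrow> 'a \<Rightarrow> 'b list" where
  "orbit_word f w k x = map (\<lambda>t. w ((f ^^ t) x)) [0..<k]"

lemma length_orbit_word [simp]: "length (orbit_word f w k x) = k"
  by (simp add: orbit_word_def)

lemma orbit_word_Suc: "orbit_word f w (Suc k) x = w x # orbit_word f w k (f x)"
  unfolding orbit_word_def by (simp add: map_upt_Suc funpow_Suc_right del: upt_Suc funpow.simps)

lemma orbit_word_Suc_snoc: "orbit_word f w (Suc k) x = orbit_word f w k x @ [w ((f ^^ k) x)]"
  by (simp add: orbit_word_def)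

lemma orbit_word_rotate1:
  assumes "(f ^^ k) x = x"
  shows "orbit_word f w k (f x) = rotate1 (orbit_word f w k x)"
proof (cases k)
  case (Suc m)
  have "(f ^^ m) (f x) = x" using assms Suc by (simp add: funpow_Suc_right del: funpow.simps)
  then have "orbit_word f w k (f x) = orbit_word f w m (f x) @ [w x]"
    using Suc orbit_word_Suc_snoc[of f w m "f x"] by simp
  then show ?thesis using Suc by (simp add: orbit_word_Suc)
qed (simp add: orbit_word_def)

lemma orbit_word_mono:
  fixes w :: "'a \<Rightarrow> 'b::order"
  assumes le: "\<And>x y. P x y \<Longrightarrow> w x \<le> w y"
    and step: "\<And>x y. P x y \<Longrightarrow> w x = w y \<Longrightarrow> P (f x) (f y)"
  shows "P x y \<Longrightarrow> orbit_word f w k x \<le> orbit_word f w k y"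
proof (induction k arbitrary: x y)
  case (Suc k)
  then show ?case using le[of x y] step[of x y] by (auto simp: orbit_word_Suc order.order_iff_strict)
qed (simp add: orbit_word_def)

lemma less_append_same_length:
  fixes xs ys :: "'a::order list"
  shows "length xs = length ys \<Longrightarrow> xs < ys \<Longrightarrow> xs @ us < ys @ vs"
  by (induct xs ys rule: list_induct2) auto

lemma periodic_mult:
  fixes g :: "nat \<Rightarrow> 'a"
  assumes "\<And>t. g (t + d) = g t"
  shows "g (t + k * d) = g t"
proof (induction k)
  case (Suc k)
  have "t + Suc k * d = (t + k * d) + d" by simp
  then show ?case using Suc assms by presburger
qed simp

lemma coprime_periods_imp_constant:
  fixes g :: "nat \<Rightarrow> 'a"
  assumes d: "\<And>t. g (t + d) = g t" and n: "\<And>t. g (t + n) = g t" and "coprime d n"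
  shows "g s = g 0"
proof -
  have mod_n: "g t = g (t mod n)" for t
    using periodic_mult[of g n "t mod n" "t div n", OF n] by (simp add: mult.commute)
  obtain m where "[d * m = 1] (mod n)"
    using cong_solve_coprime_nat[OF \<open>coprime d n\<close>] by auto
  then have "[d * (m * s) = s] (mod n)"
    using cong_mult[of "d * m" 1 n s s] by (simp add: ac_simps)
  then have "g s = g ((m * s) * d)"
    by (metis mod_n cong_def mult.commute)
  also have "\<dots> = g 0"
    using periodic_mult[of g d 0, OF d] by simp
  finally show ?thesis .
qed

lemma lift_Suc_mono_le_ivl:
  fixes u :: "nat \<Rightarrow> 'a::preorder"
  assumes "\<And>i. a \<le> i \<Longrightarrow> i < b \<Longrightarrow> u i \<le> u (Suc i)" and "a \<le> b"
  shows "u a \<le> u b"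
  using assms(2)
proof (induction rule: dec_induct)
  case (step i)
  show ?case using step.IH assms(1)[OF step.hyps] by (rule order_trans)
qed simp

lemma lift_Suc_less_on_plateau:
  fixes u :: "nat \<Rightarrow> 'a::order" and \<sigma> :: "nat \<Rightarrow> 'b::order"
  assumes le: "\<And>i. a \<le> i \<Longrightarrow> i < b \<Longrightarrow> u i \<le> u (Suc i)"
    and less: "\<And>i. a \<le> i \<Longrightarrow> i < b \<Longrightarrow> u i = u (Suc i) \<Longrightarrow> \<sigma> i < \<sigma> (Suc i)"
    and "a < b" and "u a = u b"
  shows "\<sigma> a < \<sigma> b"
proof -
  have flat: "u i = u (Suc i)" if "a \<le> i" "i < b" for i
  proof (rule order.antisym)
    show "u i \<le> u (Suc i)" using le that .
    have "u (Suc i) \<le> u b"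
      by (rule lift_Suc_mono_le_ivl[where u = u]) (use that in \<open>auto intro: le\<close>)
    moreover have "u a \<le> u i"
      by (rule lift_Suc_mono_le_ivl[where u = u]) (use that in \<open>auto intro: le\<close>)
    ultimately show "u (Suc i) \<le> u i" using \<open>u a = u b\<close> by simp
  qed
  have "Suc a \<le> b" using \<open>a < b\<close> by simp
  then show ?thesis
  proof (induction rule: dec_induct)
    case base
    show ?case using less[OF order.refl \<open>a < b\<close> flat[OF order.refl \<open>a < b\<close>]] .
  next
    case (step j)
    have "a \<le> j" using step.hyps(1) by simp
    show ?case using step.IH less[OF \<open>a \<le> j\<close> step.hyps(2) flat[OF \<open>a \<le> j\<close> step.hyps(2)]]
      by (rule order.strict_trans)
  qed
qed

definition ranks_by :: "nat \<Rightarrow> (nat \<Rightarrow> 'b::ord) \<Rightarrow> (nat \<Rightarrow> nat) \<Rightarrow> bool" where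
  "ranks_by n key \<pi> \<longleftrightarrow>
    \<pi> permutes {1..n} \<and> (\<forall>x\<in>{1..n}. \<forall>y\<in>{1..n}. \<pi> x < \<pi> y \<longrightarrow> key x < key y)"

lemma ranks_by_less_iff:
  fixes key :: "nat \<Rightarrow> 'b::order"
  assumes "ranks_by n key \<pi>" and "x \<in> {1..n}" "y \<in> {1..n}"
  shows "\<pi> x < \<pi> y \<longleftrightarrow> key x < key y"
proof
  assume "key x < key y"
  moreover have "\<pi> x \<noteq> \<pi> y"
    using calculation permutes_inj assms(1) unfolding ranks_by_def by (metis injD less_irrefl)
  ultimately show "\<pi> x < \<pi> y"
    using assms unfolding ranks_by_def by (meson less_asym linorder_neqE_nat)
qed (use assms in \<open>auto simp: ranks_by_def\<close>)

lemma ranks_by_eq_card: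
  fixes key :: "nat \<Rightarrow> 'b::order"
  assumes rank: "ranks_by n key \<pi>" and x: "x \<in> {1..n}"
  shows "\<pi> x = card {y\<in>{1..n}. key y < key x} + 1"
proof -
  have perm: "\<pi> permutes {1..n}" using rank by (simp add: ranks_by_def)
  have \<pi>x: "\<pi> x \<in> {1..n}" using x by (simp only: permutes_in_image[OF perm])
  have "{y\<in>{1..n}. key y < key x} = {y\<in>{1..n}. \<pi> y < \<pi> x}"
    using ranks_by_less_iff[OF rank _ x] by blast
  then have "card {y\<in>{1..n}. key y < key x} = card (\<pi> ` {y\<in>{1..n}. \<pi> y < \<pi> x})"
    using permutes_inj[OF perm] by (simp add: card_image inj_on_subset)
  also have "\<pi> ` {y\<in>{1..n}. \<pi> y < \<pi> x} = {z\<in>\<pi> ` {1..n}. z < \<pi> x}" by blast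
  also have "\<dots> = {1..<\<pi> x}" using permutes_image[OF perm] \<pi>x by auto
  finally show ?thesis using \<pi>x by simp
qed

lemma ex_ranks_by:
  fixes key :: "nat \<Rightarrow> 'b::linorder"
  assumes inj: "inj_on key {1..n}"
  shows "\<exists>\<pi>. ranks_by n key \<pi>"
proof -
  define r where "r x = card {y\<in>{1..n}. key y < key x} + 1" for x
  have r_less: "r x < r y" if "x \<in> {1..n}" "key x < key y" for x y
  proof -
    have "{z\<in>{1..n}. key z < key x} \<subset> {z\<in>{1..n}. key z < key y}"
      using that by (auto intro: less_trans)
    then show ?thesis unfolding r_def by (simp add: psubset_card_mono)
  qed
  have key_neq: "key x \<noteq> key y" if "x \<in> {1..n}" "y \<in> {1..n}" "x \<noteq> y" for x y
    using inj that by (auto dest: inj_onD)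
  have r_mono: "key x < key y" if "x \<in> {1..n}" "y \<in> {1..n}" "r x < r y" for x y
    using that r_less[of y x] key_neq[of x y] by (cases "x = y") (auto simp: neq_iff)
  have "inj_on r {1..n}"
  proof (rule inj_onI, rule ccontr)
    fix x y assume "x \<in> {1..n}" "y \<in> {1..n}" "r x = r y" "x \<noteq> y"
    then show False using key_neq[of x y] r_less[of x y] r_less[of y x] by (auto simp: neq_iff)
  qed
  moreover have "r ` {1..n} \<subseteq> {1..n}"
  proof (rule image_subsetI)
    fix x assume "x \<in> {1..n}"
    then have "{y\<in>{1..n}. key y < key x} \<subset> {1..n}" by blast
    then have "card {y\<in>{1..n}. key y < key x} < n" using psubset_card_mono[of "{1..n}"] by simp
    then show "r x \<in> {1..n}" by (simp add: r_def)
  qed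
  ultimately have "bij_betw r {1..n} {1..n}" by (simp add: bij_betw_def endo_inj_surj)
  define \<pi> where "\<pi> x = (if x \<in> {1..n} then r x else x)" for x
  have "bij_betw \<pi> {1..n} {1..n}"
    using \<open>bij_betw r {1..n} {1..n}\<close> by (rule bij_betw_cong[THEN iffD1, rotated]) (simp add: \<pi>_def)
  then have "\<pi> permutes {1..n}" by (rule bij_imp_permutes) (auto simp: \<pi>_def)
  then have "ranks_by n key \<pi>"
    using r_mono by (simp add: ranks_by_def \<pi>_def)
  then show ?thesis by blast
qed

lemma ex1_ranks_by:
  fixes key :: "nat \<Rightarrow> 'b::linorder"
  assumes "inj_on key {1..n}"
  shows "\<exists>!\<pi>. ranks_by n key \<pi>"
proof (rule ex_ex1I)
  show "\<exists>\<pi>. ranks_by n key \<pi>" using assms by (rule ex_ranks_by)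
next
  fix \<pi> \<tau> assume \<pi>: "ranks_by n key \<pi>" and \<tau>: "ranks_by n key \<tau>"
  show "\<pi> = \<tau>"
  proof
    fix x show "\<pi> x = \<tau> x"
    proof (cases "x \<in> {1..n}")
      case True
      then show ?thesis using ranks_by_eq_card[OF \<pi>] ranks_by_eq_card[OF \<tau>] by simp
    next
      case False
      have "\<pi> permutes {1..n}" "\<tau> permutes {1..n}" using \<pi> \<tau> by (simp_all add: ranks_by_def)
      then show ?thesis using permutes_not_in False by metis
    qed
  qed
qed

lemma cyc_permutes: "0 < n \<Longrightarrow> cyc n permutes {1..n}"
  by (intro bij_imp_permutes bij_betwI[where g = "\<lambda>y. if y = 1 then n else y - 1"])
    (auto simp: cyc_def)

lemma funpow_cyc: "y < n \<Longrightarrow> (cyc n ^^ t) (Suc y) = Suc ((y + t) mod n)"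
  by (induction t) (auto simp: cyc_def mod_Suc Suc_lessI)

lemma funpow_cyc_self: "x \<in> {1..n} \<Longrightarrow> (cyc n ^^ n) x = x"
  by (cases x) (auto simp: funpow_cyc)

lemma funpow_cyc_mod: "x \<in> {1..n} \<Longrightarrow> (cyc n ^^ t) x = (cyc n ^^ (t mod n)) x"
  by (cases x) (auto simp: funpow_cyc mod_add_right_eq)

lemma funpow_cyc_reaches:
  assumes "x \<in> {1..n}" "y \<in> {1..n}"
  obtains t where "t < n" "(cyc n ^^ t) x = y"
proof -
  obtain a b where ab: "x = Suc a" "y = Suc b" "a < n" "b < n"
    using assms by (cases x; cases y) auto
  have "(a + (b + n - a) mod n) mod n = b"
    using ab by (simp add: mod_add_right_eq)
  then show ?thesis
    using ab by (intro that[of "(b + n - a) mod n"]) (auto simp: funpow_cyc)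
qed

lemma rot_eq_orbit_word: "x \<in> {1..n} \<Longrightarrow> rot n w x = orbit_word (cyc n) w n x"
  by (cases x) (auto simp: rot_def orbit_word_def funpow_cyc simp del: upt_Suc intro!: nth_equalityI)

lemma rot_Cons: "x \<in> {1..n} \<Longrightarrow> rot n w x = w x # orbit_word (cyc n) w (n - 1) (cyc n x)"
  by (cases n) (auto simp: rot_eq_orbit_word orbit_word_Suc)

lemma rot_cyc: "x \<in> {1..n} \<Longrightarrow> rot n w (cyc n x) = rotate1 (rot n w x)"
  using permutes_in_image[OF cyc_permutes, of n x]
  by (simp add: rot_eq_orbit_word orbit_word_rotate1 funpow_cyc_self)

lemma rot_less_imp_le:
  "x \<in> {1..n} \<Longrightarrow> y \<in> {1..n} \<Longrightarrow> rot n w x < rot n w y \<Longrightarrow> w x \<le> w y"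
  by (auto simp: rot_Cons[of x] rot_Cons[of y])

lemma rot_less_cyc:
  assumes "x \<in> {1..n}" "y \<in> {1..n}" "rot n w x < rot n w y" "w x = w y"
  shows "rot n w (cyc n x) < rot n w (cyc n y)"
  using assms by (simp add: rot_cyc rot_Cons[of x] rot_Cons[of y] less_append_same_length)

lemma rot_eq_imp_orbit_eq:
  assumes "x \<in> {1..n}" "y \<in> {1..n}" "rot n w x = rot n w y"
  shows "w ((cyc n ^^ t) x) = w ((cyc n ^^ t) y)"
proof -
  have "0 < n" using assms(1) by simp
  then have "orbit_word (cyc n) w n x ! (t mod n) = orbit_word (cyc n) w n y ! (t mod n)"
    using assms by (simp add: rot_eq_orbit_word)
  then show ?thesis
    using \<open>0 < n\<close> assms by (simp add: orbit_word_def funpow_cyc_mod[of _ n t])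
qed

lemma rot_eq_imp_constant:
  assumes "prime n" and x: "x \<in> {1..n}" and y: "y \<in> {1..n}" and "x \<noteq> y"
    and eq: "rot n w x = rot n w y" and i: "i \<in> {1..n}"
  shows "w i = w x"
proof -
  define g where "g t = w ((cyc n ^^ t) x)" for t
  obtain d where "d < n" and d: "(cyc n ^^ d) x = y" using funpow_cyc_reaches[OF x y] .
  have "d \<noteq> 0"
  proof
    assume "d = 0"
    with d \<open>x \<noteq> y\<close> show False by simp
  qed
  have "g (t + d) = g t" for t
    using rot_eq_imp_orbit_eq[OF y x eq[symmetric], of t] by (simp add: g_def funpow_add d)
  moreover have "g (t + n) = g t" for t
    using x by (simp add: g_def funpow_add funpow_cyc_self)
  moreover have "coprime d n"
    using prime_imp_coprime[OF \<open>prime n\<close>, of d] nat_dvd_not_less[of d n] \<open>d < n\<close> \<open>d \<noteq> 0\<close>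
    by (simp add: coprime_commute)
  ultimately have "g s = g 0" for s by (rule coprime_periods_imp_constant)
  moreover obtain s where "(cyc n ^^ s) x = i" using funpow_cyc_reaches[OF x i] .
  ultimately show ?thesis by (auto simp: g_def)
qed

lemma inj_on_rot:
  assumes "prime n" and "\<exists>i\<in>{1..n}. \<exists>j\<in>{1..n}. w i \<noteq> w j"
  shows "inj_on (rot n w) {1..n}"
proof (rule inj_onI, rule ccontr)
  fix x y assume "x \<in> {1..n}" "y \<in> {1..n}" "rot n w x = rot n w y" "x \<noteq> y"
  then have "w i = w x" if "i \<in> {1..n}" for i
    using rot_eq_imp_constant[OF \<open>prime n\<close>] that by blast
  then show False using assms(2) by metis
qed

lemma cstd_eq_iff_ranks_by_rot:
  assumes "prime n" and "\<exists>i\<in>{1..n}. \<exists>j\<in>{1..n}. w i \<noteq> w j"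
  shows "cstd n w = \<pi> \<longleftrightarrow> ranks_by n (rot n w) \<pi>"
proof -
  have ex1: "\<exists>!\<pi>. ranks_by n (rot n w) \<pi>"
    using inj_on_rot[OF assms] by (rule ex1_ranks_by)
  have cstd: "cstd n w = (THE \<pi>. ranks_by n (rot n w) \<pi>)"
    by (simp add: cstd_def ranks_by_def list_less_def lexordp_conv_lexord)
  show ?thesis
  proof
    assume "cstd n w = \<pi>"
    then show "ranks_by n (rot n w) \<pi>" using theI'[OF ex1] by (simp add: cstd)
  next
    assume "ranks_by n (rot n w) \<pi>"
    then show "cstd n w = \<pi>" using the1_equality[OF ex1] by (simp add: cstd)
  qed
qed

definition sorted_with_ties_at_ascents ::
    "nat \<Rightarrow> (nat \<Rightarrow> nat) \<Rightarrow> (nat \<Rightarrow> nat) \<Rightarrow> (nat \<Rightarrow> nat) \<Rightarrow> bool" where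
  "sorted_with_ties_at_ascents n w \<pi> \<sigma> \<longleftrightarrow>
    (\<forall>i\<in>{1..<n}. w (inv \<pi> i) \<le> w (inv \<pi> (Suc i)) \<and>
      (w (inv \<pi> i) = w (inv \<pi> (Suc i)) \<longrightarrow> \<sigma> i < \<sigma> (Suc i)))"

lemma mem_Aset_Des_iff:
  assumes "\<forall>i\<in>{1..n}. w i \<ge> 1" and "inj_on \<sigma> {1..n}"
  shows "w \<in> Aset n \<pi> (Des n \<sigma>) \<longleftrightarrow> sorted_with_ties_at_ascents n w \<pi> \<sigma>"
proof -
  have "w \<in> Aset n \<pi> (Des n \<sigma>) \<longleftrightarrow> (\<forall>i\<in>{1..<n}. w (inv \<pi> i) \<le> w (inv \<pi> (Suc i)) \<and>
      (\<sigma> (Suc i) < \<sigma> i \<longrightarrow> w (inv \<pi> i) < w (inv \<pi> (Suc i))))"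
    using assms(1) by (auto simp: Aset_def Des_def)
  also have "\<dots> \<longleftrightarrow> sorted_with_ties_at_ascents n w \<pi> \<sigma>"
    unfolding sorted_with_ties_at_ascents_def
  proof (intro ball_cong refl)
    fix i assume "i \<in> {1..<n}"
    then have "\<sigma> i \<noteq> \<sigma> (Suc i)" using inj_onD[OF assms(2), of i "Suc i"] by auto
    then show "(w (inv \<pi> i) \<le> w (inv \<pi> (Suc i)) \<and>
        (\<sigma> (Suc i) < \<sigma> i \<longrightarrow> w (inv \<pi> i) < w (inv \<pi> (Suc i)))) \<longleftrightarrow>
        (w (inv \<pi> i) \<le> w (inv \<pi> (Suc i)) \<and>
        (w (inv \<pi> i) = w (inv \<pi> (Suc i)) \<longrightarrow> \<sigma> i < \<sigma> (Suc i)))"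
      by auto
  qed
  finally show ?thesis .
qed

lemma ranks_by_rot_imp_sorted:
  assumes rank: "ranks_by n (rot n w) \<pi>"
  shows "sorted_with_ties_at_ascents n w \<pi> (\<pi> \<circ> cyc n \<circ> inv \<pi>)"
  unfolding sorted_with_ties_at_ascents_def
proof
  fix i assume "i \<in> {1..<n}"
  have perm: "\<pi> permutes {1..n}" using rank by (simp add: ranks_by_def)
  define x y where "x = inv \<pi> i" and "y = inv \<pi> (Suc i)"
  have x: "x \<in> {1..n}" and y: "y \<in> {1..n}"
    using \<open>i \<in> {1..<n}\<close> permutes_in_image[OF permutes_inv[OF perm]] by (auto simp: x_def y_def)
  have "\<pi> x < \<pi> y" by (simp add: x_def y_def permutes_inverses(1)[OF perm])
  then have less: "rot n w x < rot n w y" using ranks_by_less_iff[OF rank x y] by blast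
  have "\<pi> (cyc n x) < \<pi> (cyc n y)" if "w x = w y"
  proof -
    have "cyc n x \<in> {1..n}" "cyc n y \<in> {1..n}"
      using x y permutes_in_image[OF cyc_permutes] by auto
    then show ?thesis
      using rot_less_cyc[OF x y less that] ranks_by_less_iff[OF rank] by blast
  qed
  then show "w (inv \<pi> i) \<le> w (inv \<pi> (Suc i)) \<and>
      (w (inv \<pi> i) = w (inv \<pi> (Suc i)) \<longrightarrow> (\<pi> \<circ> cyc n \<circ> inv \<pi>) i < (\<pi> \<circ> cyc n \<circ> inv \<pi>) (Suc i))"
    using rot_less_imp_le[OF x y less] by (simp add: x_def y_def)
qed

lemma sorted_imp_ranks_by_rot:
  assumes "prime n" and nonconst: "\<exists>i\<in>{1..n}. \<exists>j\<in>{1..n}. w i \<noteq> w j"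
    and perm: "\<pi> permutes {1..n}"
    and sorted: "sorted_with_ties_at_ascents n w \<pi> (\<pi> \<circ> cyc n \<circ> inv \<pi>)"
  shows "ranks_by n (rot n w) \<pi>"
  unfolding ranks_by_def
proof (intro conjI perm ballI impI)
  fix x y assume x: "x \<in> {1..n}" and y: "y \<in> {1..n}" and "\<pi> x < \<pi> y"
  define P where "P a b \<longleftrightarrow> a \<in> {1..n} \<and> b \<in> {1..n} \<and> \<pi> a < \<pi> b" for a b
  have \<pi>_in: "\<pi> z \<in> {1..n}" if "z \<in> {1..n}" for z
    using that by (simp only: permutes_in_image[OF perm])
  have inv_\<pi>: "inv \<pi> (\<pi> z) = z" for z
    using permutes_inverses(2)[OF perm] .
  let ?u = "\<lambda>i. w (inv \<pi> i)" and ?\<sigma> = "\<pi> \<circ> cyc n \<circ> inv \<pi>"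
  have steps: "?u i \<le> ?u (Suc i)" "?u i = ?u (Suc i) \<Longrightarrow> ?\<sigma> i < ?\<sigma> (Suc i)"
    if "\<pi> a \<le> i" "i < \<pi> b" "a \<in> {1..n}" "b \<in> {1..n}" for a b i
    using sorted that \<pi>_in[of a] \<pi>_in[of b] unfolding sorted_with_ties_at_ascents_def by auto
  have "orbit_word (cyc n) w n x \<le> orbit_word (cyc n) w n y"
  proof (rule orbit_word_mono[of P])
    fix a b assume "P a b"
    then show "w a \<le> w b"
      using lift_Suc_mono_le_ivl[of "\<pi> a" "\<pi> b" ?u] steps(1)[of a _ b] by (simp add: P_def inv_\<pi>)
    assume "w a = w b"
    then have "?\<sigma> (\<pi> a) < ?\<sigma> (\<pi> b)"
      using \<open>P a b\<close> lift_Suc_less_on_plateau[of "\<pi> a" "\<pi> b" ?u ?\<sigma>] steps[of a _ b]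
      by (simp add: P_def inv_\<pi>)
    then show "P (cyc n a) (cyc n b)"
      using \<open>P a b\<close> permutes_in_image[OF cyc_permutes, of n] by (auto simp: P_def inv_\<pi>)
  qed (use x y \<open>\<pi> x < \<pi> y\<close> in \<open>unfold P_def, blast\<close>)
  moreover have "rot n w x \<noteq> rot n w y"
    using inj_on_rot[OF \<open>prime n\<close> nonconst] x y \<open>\<pi> x < \<pi> y\<close> by (auto dest: inj_onD)
  ultimately show "rot n w x < rot n w y"
    unfolding rot_eq_orbit_word[OF x] rot_eq_orbit_word[OF y]
    by (rule order.not_eq_order_implies_strict[rotated])
qed

theorem lemma2p2:
  fixes n :: nat and w \<pi> :: "nat \<Rightarrow> nat"
  assumes "prime n"
    and "\<forall>i\<in>{1..n}. w i \<ge> 1"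
    and "\<exists>i\<in>{1..n}. \<exists>j\<in>{1..n}. w i \<noteq> w j"
    and "\<pi> permutes {1..n}"
  shows "cstd n w = \<pi> \<longleftrightarrow> w \<in> Aset n \<pi> (Des n (\<pi> \<circ> cyc n \<circ> inv \<pi>))"
proof -
  have "(\<pi> \<circ> cyc n \<circ> inv \<pi>) permutes {1..n}"
    using assms(4) cyc_permutes prime_gt_0_nat[OF assms(1)] by (intro permutes_compose permutes_inv)
  then have inj: "inj_on (\<pi> \<circ> cyc n \<circ> inv \<pi>) {1..n}"
    by (simp add: permutes_inj_on)
  have "cstd n w = \<pi> \<longleftrightarrow> ranks_by n (rot n w) \<pi>"
    using assms(1,3) by (rule cstd_eq_iff_ranks_by_rot)
  also have "\<dots> \<longleftrightarrow> sorted_with_ties_at_ascents n w \<pi> (\<pi> \<circ> cyc n \<circ> inv \<pi>)"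
    using ranks_by_rot_imp_sorted sorted_imp_ranks_by_rot[OF assms(1,3,4)] by blast
  also have "\<dots> \<longleftrightarrow> w \<in> Aset n \<pi> (Des n (\<pi> \<circ> cyc n \<circ> inv \<pi>))"
    using mem_Aset_Des_iff[OF assms(2) inj] by simp
  finally show ?thesis .
qed

end
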